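(* For every smooth map $\varphi:\mathbb R^N\to G_R$ (not necessarily a solution of the Euler–Lagrange equations), the Lagrangian coefficients $\mathscr L_k$ satisfy the identity $$\frac{\partial\mathscr L_k}{\partial t^\ell}-\frac{\partial\mathscr L_\ell}{\partial t^k}+\Upsilon_k^m P_{mn}\Upsilon_\ell^n=\{H_k,H_\ell\}_R,\qquad k,\ell=1,\dots,N,$$ with summation over repeated indices.
   Context: Setting: $\mathfrak g$ complex matrix Lie algebra with dual $\mathfrak g^*$, pairing $(\cdot,\cdot)$; $R:\mathfrak g\to\mathfrak g$ solves $[RX,RY]-R([RX,Y]+[X,RY])=-[X,Y]$; $[X,Y]_R=\frac12([RX,Y]+[X,RY])$; $G_R$ the Lie group of $(\mathfrak g,[\cdot,\cdot]_R)$ with associative product $\cdot_R$ and coadjoint action $\mathrm{Ad}^{R*}$; $\Lambda\in\mathfrak g^*$ and $\mathcal O_\Lambda=\{\mathrm{Ad}^{R*}_\varphi\Lambda\}$. $H_k$ ($k=1,\dots,N$) are smooth ($G$-$\mathrm{Ad}^*$-invariant) functions on $\mathfrak g^*$. The Lie–Poisson $R$-bracket is $\{f,g\}_R(\xi)=(\xi,[\nabla f(\xi),\nabla g(\xi)]_R)$. Choose local coordinates $\phi_\alpha$ ($\alpha=1,\dots,M$) on $G_R$; $\pi_\alpha=(\Lambda,\varphi^{-1}\cdot_R\partial\varphi/\partial\phi_\alpha)$, so that $\mathscr L_k=(\mathrm{Ad}^{R*}_\varphi\Lambda,\partial_{t^k}\varphi\cdot_R\varphi^{-1})-H_k(L)=\pi_\alpha\partial_{t^k}\phi_\alpha-H_k(L)$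 with $L=\mathrm{Ad}^{R*}_\varphi\Lambda$. Assume $\chi:G_R\to\mathcal O_\Lambda$, $\varphi\mapsto\mathrm{Ad}^{R*}_\varphi\Lambda$, is a submersion, and let $\xi_m$ ($m=1,\dots,2p$) be local coordinates on $\mathcal O_\Lambda$. The Kostant–Kirillov–Souriau form of $\{\cdot,\cdot\}_R$ on $\mathcal O_\Lambda$ is written $\omega_R=\omega_{mn}\delta\xi_m\wedge\delta\xi_n$ with $\omega_{mn}$ antisymmetric, normalised so that $\Omega_{\alpha\beta}:=\frac{\partial\pi_\alpha}{\partial\phi_\beta}-\frac{\partial\pi_\beta}{\partial\phi_\alpha}=\frac{\partial\xi_m}{\partial\phi_\alpha}\frac{\partial\xi_n}{\partial\phi_\beta}\omega_{mn}$. $P_{mn}$ is defined by $P_{mn}\omega_{nr}=\delta_{mr}$, so that on $\mathcal O_\Lambda$, $\{f,g\}_R=P_{mn}\frac{\partial f}{\partial\xi_m}\frac{\partial g}{\partial\xi_n}$. With $\xi_m(t)=\xi_m(L(t))$, set $\Upsilon_k^n=\sum_m\omega_{mn}\partial_{t^k}\xi_m-\frac{\partial H_k}{\partial\xi_n}$ (the Euler–Lagrange equations of $\mathscr L_k$ are equivalent to $\Upsilon_k^n=0$ for all $n$). *)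

theory Defs
  imports "HOL-Analysis.Analysis"
begin

text \<open>Index types: 'n indexes the times t^k (k = 1..N),
 'a indexes the coordinates phi_alpha on G_R (alpha = 1..M), 'm indexes the coordinates
 xi_m on the coadjoint orbit O_Lambda (m = 1..2p).\<close>

definition tpartial :: "(real^'n \<Rightarrow> 'b::real_normed_vector) \<Rightarrow> 'n \<Rightarrow> real^'n \<Rightarrow> 'b" where
  "tpartial f k t = vector_derivative (\<lambda>s::real. f (t + s *\<^sub>R axis k 1)) (at 0)"

definition smooth_t_on :: "(real^'n) set \<Rightarrow> (real^'n \<Rightarrow> 'b::real_normed_vector) \<Rightarrow> bool" where
  "smooth_t_on U f \<longleftrightarrow> open U \<and>
     (\<forall>ks::'n list. (foldr (\<lambda>k g. tpartial g k) ks f) differentiable_on U)"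

definition cpartial :: "(complex^'a \<Rightarrow> complex) \<Rightarrow> 'a \<Rightarrow> complex^'a \<Rightarrow> complex" where
  "cpartial f b x = deriv (\<lambda>z::complex. f (x + axis b z)) 0"

definition holo_on :: "(complex^'a) set \<Rightarrow> (complex^'a \<Rightarrow> complex) \<Rightarrow> bool" where
  "holo_on W f \<longleftrightarrow> open W \<and>
     (\<forall>x\<in>W. \<exists>D. (f has_derivative D) (at x) \<and> (\<forall>(c::complex) v. D (c *s v) = c * D v))"

definition xivec :: "('m::finite \<Rightarrow> complex^'a \<Rightarrow> complex) \<Rightarrow> complex^'a \<Rightarrow> complex^'m" where
  "xivec \<xi> x = (\<chi> m. \<xi> m x)"

text \<open>Lagrangian coefficient L_k(t) = pi_alpha dphi_alpha/dt^k - H_k(L(t)),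
 where h k is H_k expressed in the orbit coordinates xi.\<close>
definition Lag ::
  "('a::finite \<Rightarrow> complex^'a \<Rightarrow> complex) \<Rightarrow> ('m \<Rightarrow> complex^'a \<Rightarrow> complex)
   \<Rightarrow> ('n \<Rightarrow> complex^'m \<Rightarrow> complex) \<Rightarrow> (real^'n \<Rightarrow> complex^'a) \<Rightarrow> 'n \<Rightarrow> real^'n \<Rightarrow> complex" where
  "Lag \<pi> \<xi> h \<phi> k t =
     (\<Sum>\<alpha>\<in>UNIV. \<pi> \<alpha> (\<phi> t) * tpartial (\<lambda>s. \<phi> s $ \<alpha>) k t) - h k (xivec \<xi> (\<phi> t))"

definition Ups ::
  "('m::finite \<Rightarrow> complex^'a \<Rightarrow> complex) \<Rightarrow> ('m \<Rightarrow> 'm \<Rightarrow> complex^'m \<Rightarrow> complex)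
   \<Rightarrow> ('n \<Rightarrow> complex^'m \<Rightarrow> complex) \<Rightarrow> (real^'n \<Rightarrow> complex^'a) \<Rightarrow> 'n \<Rightarrow> 'm \<Rightarrow> real^'n \<Rightarrow> complex" where
  "Ups \<xi> \<omega> h \<phi> k n t =
     (\<Sum>m\<in>UNIV. \<omega> m n (xivec \<xi> (\<phi> t)) * tpartial (\<lambda>s. \<xi> m (\<phi> s)) k t)
     - cpartial (h k) n (xivec \<xi> (\<phi> t))"

definition PB :: "('m::finite \<Rightarrow> 'm \<Rightarrow> complex^'m \<Rightarrow> complex) \<Rightarrow> (complex^'m \<Rightarrow> complex)
   \<Rightarrow> (complex^'m \<Rightarrow> complex) \<Rightarrow> complex^'m \<Rightarrow> complex" where
  "PB P f g y = (\<Sum>m\<in>UNIV. \<Sum>n\<in>UNIV. P m n y * cpartial f m y * cpartial g n y)"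

end

theory Submission
  imports Defs
begin

(*
  Write u_k = d phi / d t^k and x_k = d xi (u_k).  Differentiating L_k along t^l, the terms
  containing second derivatives of phi drop out of d_l L_k - d_k L_l by the symmetry of mixed
  partials, and the terms containing d pi give d pi (u_l, u_k) - d pi (u_k, u_l) = omega (x_k, x_l)
  by the normalisation Omega = xi^* omega.  Since Upsilon_k = omega^T x_k - dH_k and P is the
  inverse of the antisymmetric omega, Upsilon_k P Upsilon_l expands to
  - omega (x_k, x_l) - <x_k, dH_l> + <dH_k, x_l> + {H_k, H_l}_R, and everything but the bracket cancels.
  The identity is pointwise.
*)

lemma has_vector_derivative_along_line:
  fixes F :: "'x::real_normed_vector \<Rightarrow> 'b::real_normed_vector"
  assumes "(F has_derivative F') (at (q + x *\<^sub>R v))"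
  shows "((\<lambda>s. F (q + s *\<^sub>R v)) has_vector_derivative F' v) (at x)"
proof -
  have "((\<lambda>s::real. q + s *\<^sub>R v) has_derivative (\<lambda>s. s *\<^sub>R v)) (at x)"
    by (auto intro!: derivative_eq_intros)
  from has_derivative_compose[OF this assms]
  have "((\<lambda>s. F (q + s *\<^sub>R v)) has_derivative (\<lambda>s. F' (s *\<^sub>R v))) (at x)"
    by (simp add: o_def)
  moreover have "F' (s *\<^sub>R v) = s *\<^sub>R F' v" for s
    using linear_scale[OF has_derivative_linear[OF assms]] .
  ultimately show ?thesis by (simp add: has_vector_derivative_def)
qed

lemma tpartial_eq_derivative:
  fixes F :: "real^'n \<Rightarrow> 'b::real_normed_vector"
  assumes "(F has_derivative F') (at p)"
  shows "tpartial F k p = F' (axis k 1)"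
  unfolding tpartial_def
  using has_vector_derivative_along_line[of F F' p 0 "axis k 1"] assms
  by (simp add: vector_derivative_at)

lemma tpartial_component:
  fixes F :: "real^'n \<Rightarrow> 'b::real_normed_vector^'i"
  assumes "(F has_derivative F') (at p)"
  shows "tpartial (\<lambda>s. F s $ i) k p = tpartial F k p $ i"
  using tpartial_eq_derivative[OF assms]
    tpartial_eq_derivative[OF bounded_linear.has_derivative[OF bounded_linear_vec_nth assms]]
  by simp

lemma smooth_t_on_differentiable_on:
  assumes "smooth_t_on U f"
  shows "f differentiable_on U" and "tpartial f k differentiable_on U"
    and "tpartial (tpartial f k) l differentiable_on U"
proof -
  have "foldr (\<lambda>k g. tpartial g k) ks f differentiable_on U" for ks
    using assms by (simp add: smooth_t_on_def)
  from this[of "[]"] this[of "[k]"] this[of "[l, k]"] show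
    "f differentiable_on U" "tpartial f k differentiable_on U"
    "tpartial (tpartial f k) l differentiable_on U"
    by simp_all
qed

lemma increment_linearization_bound:
  fixes g :: "real \<Rightarrow> 'b::real_normed_vector"
  assumes h: "0 \<le> h"
    and der: "\<And>y. y \<in> {0..h} \<Longrightarrow> (g has_vector_derivative g' y) (at y)"
    and close: "\<And>y. y \<in> {0..h} \<Longrightarrow> norm (g' y - D) \<le> e"
  shows "norm (g h - g 0 - h *\<^sub>R D) \<le> 3 * e * h"
proof -
  have "norm (g h - g 0 - (h - 0) *\<^sub>R g' 0) \<le> norm (h - 0) * (2 * e)"
  proof (rule vector_differentiable_bound_linearization[where S="{0..h}"])
    show "(g has_vector_derivative g' y) (at y within {0..h})" if "y \<in> {0..h}" for y
      using der[OF that] has_vector_derivative_at_within by blast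
    show "closed_segment 0 h \<subseteq> {0..h}" using h by (simp add: closed_segment_eq_real_ivl)
    show "0 \<in> {0..h}" using h by simp
    show "norm (g' y - g' 0) \<le> 2 * e" if "y \<in> {0..h}" for y
      using close[OF that] close[of 0] h norm_triangle_ineq4[of "g' y - D" "g' 0 - D"] by simp
  qed
  moreover have "norm (h *\<^sub>R g' 0 - h *\<^sub>R D) \<le> h * e"
    using close[of 0] h by (simp add: mult_left_mono flip: scaleR_diff_right)
  ultimately show ?thesis
    using h norm_triangle_ineq[of "g h - g 0 - h *\<^sub>R g' 0" "h *\<^sub>R g' 0 - h *\<^sub>R D"]
    by (simp add: algebra_simps)
qed

definition second_difference ::
  "('x::real_vector \<Rightarrow> 'b::real_vector) \<Rightarrow> 'x \<Rightarrow> 'x \<Rightarrow> 'x \<Rightarrow> real \<Rightarrow> 'b" where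
  "second_difference f t a b h = f (t + h *\<^sub>R a + h *\<^sub>R b) - f (t + h *\<^sub>R a) - f (t + h *\<^sub>R b) + f t"

lemma second_difference_commute: "second_difference f t a b h = second_difference f t b a h"
  by (simp add: second_difference_def algebra_simps)

text \<open>Linearise \<open>x \<mapsto> f (t + h b + x a) - f (t + x a)\<close>, whose derivative
  \<open>ga (t + x a + h b) - ga (t + x a)\<close> is in turn linearised in the direction \<open>b\<close>.\<close>
lemma second_difference_bound:
  fixes f :: "'x::real_normed_vector \<Rightarrow> 'b::real_normed_vector"
  assumes h: "0 < h" "2 * h < r" and na: "norm a = 1" and nb: "norm b = 1"
    and f': "\<And>p. p \<in> ball t r \<Longrightarrow> (f has_derivative f' p) (at p)"
    and ga: "\<And>p. p \<in> ball t r \<Longrightarrow> f' p a = ga p"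
    and ga': "\<And>p. p \<in> ball t r \<Longrightarrow> (ga has_derivative ga' p) (at p)"
    and close: "\<And>p. p \<in> ball t r \<Longrightarrow> norm (ga' p b - D) \<le> e"
  shows "norm (second_difference f t a b h - (h * h) *\<^sub>R D) \<le> 9 * e * h * h"
proof -
  have in_ball: "t + x *\<^sub>R a + y *\<^sub>R b \<in> ball t r" if "x \<in> {0..h}" "y \<in> {0..h}" for x y
  proof -
    have "norm (x *\<^sub>R a + y *\<^sub>R b) \<le> x + y"
      using that na nb norm_triangle_ineq[of "x *\<^sub>R a" "y *\<^sub>R b"] by simp
    then show ?thesis using that h by (simp add: dist_norm norm_minus_commute add.commute)
  qed
  have ga_increment: "norm (ga (t + x *\<^sub>R a + h *\<^sub>R b) - ga (t + x *\<^sub>R a) - h *\<^sub>R D) \<le> 3 * e * h"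
    if x: "x \<in> {0..h}" for x
    using increment_linearization_bound[where g="\<lambda>y. ga (t + x *\<^sub>R a + y *\<^sub>R b)"
        and g'="\<lambda>y. ga' (t + x *\<^sub>R a + y *\<^sub>R b) b"] h
      has_vector_derivative_along_line[OF ga'[OF in_ball[OF x]]] close[OF in_ball[OF x]]
    by simp
  define \<Delta> where "\<Delta> x = f (t + h *\<^sub>R b + x *\<^sub>R a) - f (t + x *\<^sub>R a)" for x
  have "norm (\<Delta> h - \<Delta> 0 - h *\<^sub>R (h *\<^sub>R D)) \<le> 3 * (3 * e * h) * h"
  proof (rule increment_linearization_bound[where g'="\<lambda>x. ga (t + x *\<^sub>R a + h *\<^sub>R b) - ga (t + x *\<^sub>R a)"])
    fix x assume x: "x \<in> {0..h}"
    have swap: "t + h *\<^sub>R b + x *\<^sub>R a = t + x *\<^sub>R a + h *\<^sub>R b" by (simp add: algebra_simps)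
    have "t + h *\<^sub>R b + x *\<^sub>R a \<in> ball t r" "t + x *\<^sub>R a \<in> ball t r"
      using in_ball[OF x, of h] in_ball[OF x, of 0] h by (auto simp: swap)
    from this[THEN f', THEN has_vector_derivative_along_line]
    show "(\<Delta> has_vector_derivative ga (t + x *\<^sub>R a + h *\<^sub>R b) - ga (t + x *\<^sub>R a)) (at x)"
      unfolding \<Delta>_def using has_vector_derivative_diff ga in_ball[OF x, of h] in_ball[OF x, of 0] h
      by (simp add: swap)
    show "norm (ga (t + x *\<^sub>R a + h *\<^sub>R b) - ga (t + x *\<^sub>R a) - h *\<^sub>R D) \<le> 3 * e * h"
      by (rule ga_increment[OF x])
  qed (use h in simp)
  moreover have "\<Delta> h - \<Delta> 0 - h *\<^sub>R (h *\<^sub>R D) = second_difference f t a b h - (h * h) *\<^sub>R D"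
    unfolding \<Delta>_def second_difference_def by (simp add: algebra_simps)
  ultimately show ?thesis by (simp add: mult_ac)
qed

lemma tendsto_second_difference:
  fixes f :: "real^'n \<Rightarrow> 'b::real_normed_vector"
  assumes U: "open U" "t \<in> U" and f: "f differentiable_on U"
    and fk: "tpartial f k differentiable_on U"
    and cont: "continuous (at t) (tpartial (tpartial f k) l)"
  shows "((\<lambda>h. (1 / (h * h)) *\<^sub>R second_difference f t (axis k 1) (axis l 1) h)
           \<longlongrightarrow> tpartial (tpartial f k) l t) (at_right 0)"
proof (rule tendstoI)
  fix \<epsilon> :: real assume "\<epsilon> > 0"
  define e where "e = \<epsilon> / 18"
  define D where "D = tpartial (tpartial f k) l t"
  obtain d where d: "d > 0" "\<And>p. dist p t < d \<Longrightarrow> dist (tpartial (tpartial f k) l p) D < e"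
    using cont \<open>\<epsilon> > 0\<close> unfolding continuous_at_eps_delta D_def e_def
    by (metis dist_commute zero_less_divide_iff zero_less_numeral)
  obtain r0 where r0: "r0 > 0" "ball t r0 \<subseteq> U" using U open_contains_ball by blast
  define r where "r = min r0 d"
  have inU: "p \<in> U" and near: "dist p t < d" if "p \<in> ball t r" for p
    using that r0 by (auto simp: r_def dist_commute)
  have f': "(f has_derivative frechet_derivative f (at p)) (at p)"
    and fk': "(tpartial f k has_derivative frechet_derivative (tpartial f k) (at p)) (at p)"
    if "p \<in> ball t r" for p
    using f fk U inU[OF that] by (simp_all add: differentiable_on_eq_differentiable_at frechet_derivative_works)
  have "eventually (\<lambda>h. h \<in> {0<..<r / 2}) (at_right 0)"
    using r0 d by (intro eventually_at_right_real) (simp add: r_def)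
  then show "eventually (\<lambda>h. dist ((1 / (h * h)) *\<^sub>R second_difference f t (axis k 1) (axis l 1) h)
      (tpartial (tpartial f k) l t) < \<epsilon>) (at_right 0)"
  proof eventually_elim
    case (elim h)
    then have "norm (second_difference f t (axis k 1) (axis l 1) h - (h * h) *\<^sub>R D) \<le> 9 * e * h * h"
    proof (intro second_difference_bound[where r=r and f'="\<lambda>p. frechet_derivative f (at p)"])
      fix p assume p: "p \<in> ball t r"
      show "frechet_derivative f (at p) (axis k 1) = tpartial f k p"
        using tpartial_eq_derivative[OF f'[OF p]] by simp
      show "norm (frechet_derivative (tpartial f k) (at p) (axis l 1) - D) \<le> e"
        using tpartial_eq_derivative[OF fk'[OF p]] d(2)[OF near[OF p]] by (simp add: dist_norm)
    qed (use f' fk' in auto)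
    moreover have "(1 / (h * h)) *\<^sub>R second_difference f t (axis k 1) (axis l 1) h - D
        = (1 / (h * h)) *\<^sub>R (second_difference f t (axis k 1) (axis l 1) h - (h * h) *\<^sub>R D)"
      using elim by (simp add: scaleR_diff_right)
    ultimately have "norm ((1 / (h * h)) *\<^sub>R second_difference f t (axis k 1) (axis l 1) h - D) \<le> 9 * e"
      using elim by (simp add: divide_simps mult_ac)
    then show ?case using \<open>\<epsilon> > 0\<close> by (simp add: dist_norm D_def e_def)
  qed
qed

lemma tpartial_commute:
  fixes f :: "real^'n \<Rightarrow> 'b::real_normed_vector"
  assumes "open U" "t \<in> U" "f differentiable_on U"
    and "tpartial f k differentiable_on U" "tpartial f l differentiable_on U"
    and "continuous (at t) (tpartial (tpartial f k) l)"
    and "continuous (at t) (tpartial (tpartial f l) k)"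
  shows "tpartial (tpartial f k) l t = tpartial (tpartial f l) k t"
proof (rule tendsto_unique[OF trivial_limit_at_right_real])
  show "((\<lambda>h. (1 / (h * h)) *\<^sub>R second_difference f t (axis k 1) (axis l 1) h)
          \<longlongrightarrow> tpartial (tpartial f k) l t) (at_right 0)"
    by (rule tendsto_second_difference) (use assms in auto)
  show "((\<lambda>h. (1 / (h * h)) *\<^sub>R second_difference f t (axis k 1) (axis l 1) h)
          \<longlongrightarrow> tpartial (tpartial f l) k t) (at_right 0)"
    unfolding second_difference_commute[of f t "axis k 1"]
    by (rule tendsto_second_difference) (use assms in auto)
qed

lemma smooth_t_on_tpartial_commute:
  assumes "smooth_t_on U f" "t \<in> U"
  shows "tpartial (tpartial f k) l t = tpartial (tpartial f l) k t"
proof -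
  have U: "open U" using assms(1) by (simp add: smooth_t_on_def)
  have "continuous (at t) (tpartial (tpartial f i) j)" for i j
    using smooth_t_on_differentiable_on(3)[OF assms(1), of i j] U assms(2)
    by (simp add: differentiable_on_eq_differentiable_at differentiable_imp_continuous_within)
  with U assms show ?thesis
    by (intro tpartial_commute) (auto intro: smooth_t_on_differentiable_on)
qed

lemma bounded_linear_axis: "bounded_linear (axis i :: 'b::real_normed_vector \<Rightarrow> 'b^'n)"
proof (rule bounded_linear_intro[where K=1])
  fix x y :: 'b and r :: real
  show "axis i (x + y) = (axis i x + axis i y :: 'b^'n)" by (simp add: vec_eq_iff axis_def)
  show "axis i (r *\<^sub>R x) = (r *\<^sub>R axis i x :: 'b^'n)" by (simp add: vec_eq_iff axis_def)
  have "norm (axis i x :: 'b^'n) \<le> (\<Sum>j\<in>UNIV. norm ((axis i x :: 'b^'n) $ j))"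
    unfolding norm_vec_def by (rule L2_set_le_sum) simp
  also have "\<dots> = norm x" by (simp add: axis_def if_distrib cong: if_cong)
  finally show "norm (axis i x :: 'b^'n) \<le> norm x * 1" by simp
qed

lemma has_derivative_vec_lambda:
  fixes f :: "'i::finite \<Rightarrow> 'x::real_normed_vector \<Rightarrow> 'b::real_normed_vector"
  assumes "\<And>i. (f i has_derivative f' i) F"
  shows "((\<lambda>s. \<chi> i. f i s) has_derivative (\<lambda>v. \<chi> i. f' i v)) F"
proof -
  have sum_axis: "(\<chi> i. g i) = (\<Sum>i\<in>UNIV. axis i (g i))" for g :: "'i \<Rightarrow> 'b"
    by (simp add: vec_eq_iff axis_def sum_component if_distrib cong: if_cong)
  show ?thesis
    unfolding sum_axis
    by (intro has_derivative_sum bounded_linear.has_derivative[OF bounded_linear_axis] assms)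
qed

lemma holo_on_has_derivative:
  assumes "holo_on W f" "x \<in> W"
  shows "(f has_derivative (\<lambda>v. \<Sum>\<beta>\<in>UNIV. v $ \<beta> * cpartial f \<beta> x)) (at x)"
proof -
  obtain D where D: "(f has_derivative D) (at x)" and clin: "\<And>(c::complex) v. D (c *s v) = c * D v"
    using assms unfolding holo_on_def by blast
  have cpartial: "cpartial f \<beta> x = D (axis \<beta> 1)" for \<beta>
  proof -
    have "((\<lambda>z. x + axis \<beta> z) has_derivative axis \<beta>) (at 0)"
      using bounded_linear.has_derivative[OF bounded_linear_axis, of "\<lambda>z. z" "\<lambda>z. z" "at (0::complex)"]
      by (auto intro!: derivative_eq_intros)
    moreover have "(f has_derivative D) (at (x + axis \<beta> 0))"
      using D by (metis add.right_neutral axis_eq_0_iff)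
    ultimately have "((\<lambda>z. f (x + axis \<beta> z)) has_derivative (\<lambda>z. D (axis \<beta> z))) (at 0)"
      by (rule has_derivative_compose)
    moreover have "(\<lambda>z. D (axis \<beta> z)) = (*) (D (axis \<beta> 1))"
    proof
      fix z
      have "axis \<beta> z = z *s axis \<beta> (1::complex)" by (simp add: vec_eq_iff axis_def)
      then show "D (axis \<beta> z) = D (axis \<beta> 1) * z" by (simp add: clin mult.commute)
    qed
    ultimately have "((\<lambda>z. f (x + axis \<beta> z)) has_field_derivative D (axis \<beta> 1)) (at 0)"
      by (simp add: has_field_derivative_def)
    then show ?thesis unfolding cpartial_def by (rule DERIV_imp_deriv)
  qed
  have "D = (\<lambda>v. \<Sum>\<beta>\<in>UNIV. v $ \<beta> * cpartial f \<beta> x)"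
  proof
    fix v
    have "D v = D (\<Sum>\<beta>\<in>UNIV. v $ \<beta> *s axis \<beta> 1)" by (simp add: basis_expansion)
    also have "\<dots> = (\<Sum>\<beta>\<in>UNIV. D (v $ \<beta> *s axis \<beta> 1))"
      by (rule linear_sum[OF has_derivative_linear[OF D]])
    finally show "D v = (\<Sum>\<beta>\<in>UNIV. v $ \<beta> * cpartial f \<beta> x)" by (simp add: clin cpartial)
  qed
  with D show ?thesis by simp
qed

lemma has_derivative_holo_comp:
  assumes "holo_on V f" "(\<psi> has_derivative D\<psi>) (at p)" "\<psi> p \<in> V"
  shows "((\<lambda>s. f (\<psi> s)) has_derivative (\<lambda>v. \<Sum>\<beta>\<in>UNIV. D\<psi> v $ \<beta> * cpartial f \<beta> (\<psi> p))) (at p)"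
  using has_derivative_compose[OF assms(2) holo_on_has_derivative[OF assms(1,3)]] by (simp add: o_def)

lemma tpartial_holo_comp:
  fixes \<psi> :: "real^'n \<Rightarrow> complex^'a::finite"
  assumes "holo_on V f" "(\<psi> has_derivative D\<psi>) (at p)" "\<psi> p \<in> V"
  shows "tpartial (\<lambda>s. f (\<psi> s)) k p = (\<Sum>\<beta>\<in>UNIV. tpartial \<psi> k p $ \<beta> * cpartial f \<beta> (\<psi> p))"
  using tpartial_eq_derivative[OF has_derivative_holo_comp[OF assms]] tpartial_eq_derivative[OF assms(2)]
  by simp

lemma tpartial_Lag:
  fixes \<phi> :: "real^'n \<Rightarrow> complex^'a::finite" and \<xi> :: "'m::finite \<Rightarrow> complex^'a \<Rightarrow> complex"
  assumes U: "open U" "p \<in> U" "\<phi> ` U \<subseteq> V"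
    and diff: "\<phi> differentiable_on U" "tpartial \<phi> j differentiable_on U"
    and \<pi>: "\<And>\<alpha>. holo_on V (\<pi> \<alpha>)" and \<xi>: "\<And>m. holo_on V (\<xi> m)"
    and h: "xivec \<xi> ` V \<subseteq> W" "holo_on W (h j)"
  shows "tpartial (Lag \<pi> \<xi> h \<phi> j) i p =
      (\<Sum>\<alpha>\<in>UNIV. \<pi> \<alpha> (\<phi> p) * tpartial (tpartial \<phi> j) i p $ \<alpha>
          + (\<Sum>\<beta>\<in>UNIV. tpartial \<phi> i p $ \<beta> * cpartial (\<pi> \<alpha>) \<beta> (\<phi> p)) * tpartial \<phi> j p $ \<alpha>)
      - (\<Sum>n\<in>UNIV. (\<Sum>\<beta>\<in>UNIV. tpartial \<phi> i p $ \<beta> * cpartial (\<xi> n) \<beta> (\<phi> p))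
          * cpartial (h j) n (xivec \<xi> (\<phi> p)))"
proof -
  define D\<phi> where "D\<phi> = frechet_derivative \<phi> (at p)"
  define D\<psi> where "D\<psi> = frechet_derivative (tpartial \<phi> j) (at p)"
  have \<phi>': "(\<phi> has_derivative D\<phi>) (at p)" and \<psi>': "(tpartial \<phi> j has_derivative D\<psi>) (at p)"
    using diff U by (simp_all add: D\<phi>_def D\<psi>_def differentiable_on_eq_differentiable_at frechet_derivative_works)
  have component: "tpartial (\<lambda>s. \<phi> s $ \<alpha>) j q = tpartial \<phi> j q $ \<alpha>" if "q \<in> U" for \<alpha> q
    using diff(1) U(1) that
    by (auto simp: differentiable_on_eq_differentiable_at differentiable_def intro: tpartial_component)
  have X': "((\<lambda>s. xivec \<xi> (\<phi> s)) has_derivative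
      (\<lambda>v. \<chi> n. \<Sum>\<beta>\<in>UNIV. D\<phi> v $ \<beta> * cpartial (\<xi> n) \<beta> (\<phi> p))) (at p)"
    unfolding xivec_def using \<phi>' U \<xi> by (intro has_derivative_vec_lambda has_derivative_holo_comp) auto
  have "((\<lambda>s. (\<Sum>\<alpha>\<in>UNIV. \<pi> \<alpha> (\<phi> s) * tpartial \<phi> j s $ \<alpha>) - h j (xivec \<xi> (\<phi> s))) has_derivative
      (\<lambda>v. (\<Sum>\<alpha>\<in>UNIV. \<pi> \<alpha> (\<phi> p) * D\<psi> v $ \<alpha>
              + (\<Sum>\<beta>\<in>UNIV. D\<phi> v $ \<beta> * cpartial (\<pi> \<alpha>) \<beta> (\<phi> p)) * tpartial \<phi> j p $ \<alpha>)
         - (\<Sum>n\<in>UNIV. (\<chi> n. \<Sum>\<beta>\<in>UNIV. D\<phi> v $ \<beta> * cpartial (\<xi> n) \<beta> (\<phi> p)) $ n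
              * cpartial (h j) n (xivec \<xi> (\<phi> p))))) (at p)"
    (is "(_ has_derivative ?L') _")
    using U h
    by (intro has_derivative_diff has_derivative_sum has_derivative_mult
        has_derivative_holo_comp[OF h(2) X'] has_derivative_holo_comp[OF \<pi> \<phi>']
        bounded_linear.has_derivative[OF bounded_linear_vec_nth \<psi>']) auto
  then have "(Lag \<pi> \<xi> h \<phi> j has_derivative ?L') (at p)"
    by (rule has_derivative_transform_within_open[OF _ U(1,2)]) (simp add: Lag_def component)
  from tpartial_eq_derivative[OF this, of i] show ?thesis
    using tpartial_eq_derivative[OF \<phi>', of i] tpartial_eq_derivative[OF \<psi>', of i] by simp
qed

lemma sum_swap_pairs:
  "(\<Sum>a\<in>A. \<Sum>b\<in>B. \<Sum>c\<in>C. \<Sum>d\<in>D. F a b c d) = (\<Sum>c\<in>C. \<Sum>d\<in>D. \<Sum>a\<in>A. \<Sum>b\<in>B. F a b c d)"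
proof -
  have "(\<Sum>a\<in>A. \<Sum>b\<in>B. \<Sum>c\<in>C. \<Sum>d\<in>D. F a b c d) = (\<Sum>a\<in>A. \<Sum>c\<in>C. \<Sum>b\<in>B. \<Sum>d\<in>D. F a b c d)"
    by (rule sum.cong[OF refl], rule sum.swap)
  also have "\<dots> = (\<Sum>a\<in>A. \<Sum>c\<in>C. \<Sum>d\<in>D. \<Sum>b\<in>B. F a b c d)"
    by (rule sum.cong[OF refl], rule sum.cong[OF refl], rule sum.swap)
  also have "\<dots> = (\<Sum>c\<in>C. \<Sum>a\<in>A. \<Sum>d\<in>D. \<Sum>b\<in>B. F a b c d)"
    by (rule sum.swap)
  also have "\<dots> = (\<Sum>c\<in>C. \<Sum>d\<in>D. \<Sum>a\<in>A. \<Sum>b\<in>B. F a b c d)"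
    by (rule sum.cong[OF refl], rule sum.swap)
  finally show ?thesis .
qed

lemma antisymmetric_part_pullback:
  fixes x y :: "'a::finite \<Rightarrow> 'r::comm_ring" and J :: "'m::finite \<Rightarrow> 'a \<Rightarrow> 'r"
  assumes c: "\<And>\<alpha> \<beta>. c \<alpha> \<beta> - c \<beta> \<alpha> = (\<Sum>m\<in>UNIV. \<Sum>n\<in>UNIV. J m \<alpha> * J n \<beta> * \<omega> m n)"
  shows "(\<Sum>\<alpha>\<in>UNIV. (\<Sum>\<beta>\<in>UNIV. y \<beta> * c \<alpha> \<beta>) * x \<alpha>) - (\<Sum>\<alpha>\<in>UNIV. (\<Sum>\<beta>\<in>UNIV. x \<beta> * c \<alpha> \<beta>) * y \<alpha>)
    = (\<Sum>m\<in>UNIV. \<Sum>n\<in>UNIV. (\<Sum>\<alpha>\<in>UNIV. x \<alpha> * J m \<alpha>) * (\<Sum>\<beta>\<in>UNIV. y \<beta> * J n \<beta>) * \<omega> m n)"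
proof -
  have "(\<Sum>\<alpha>\<in>UNIV. (\<Sum>\<beta>\<in>UNIV. x \<beta> * c \<alpha> \<beta>) * y \<alpha>) = (\<Sum>\<beta>\<in>UNIV. \<Sum>\<alpha>\<in>UNIV. x \<alpha> * y \<beta> * c \<beta> \<alpha>)"
    by (simp add: sum_distrib_left sum_distrib_right mult_ac)
  also have "\<dots> = (\<Sum>\<alpha>\<in>UNIV. \<Sum>\<beta>\<in>UNIV. x \<alpha> * y \<beta> * c \<beta> \<alpha>)"
    by (rule sum.swap)
  finally have swapped:
    "(\<Sum>\<alpha>\<in>UNIV. (\<Sum>\<beta>\<in>UNIV. x \<beta> * c \<alpha> \<beta>) * y \<alpha>) = (\<Sum>\<alpha>\<in>UNIV. \<Sum>\<beta>\<in>UNIV. x \<alpha> * y \<beta> * c \<beta> \<alpha>)" .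
  have "(\<Sum>\<alpha>\<in>UNIV. (\<Sum>\<beta>\<in>UNIV. y \<beta> * c \<alpha> \<beta>) * x \<alpha>) - (\<Sum>\<alpha>\<in>UNIV. (\<Sum>\<beta>\<in>UNIV. x \<beta> * c \<alpha> \<beta>) * y \<alpha>)
      = (\<Sum>\<alpha>\<in>UNIV. \<Sum>\<beta>\<in>UNIV. x \<alpha> * y \<beta> * (c \<alpha> \<beta> - c \<beta> \<alpha>))"
    unfolding swapped by (simp add: sum_distrib_left sum_distrib_right sum_subtractf right_diff_distrib mult_ac)
  also have "\<dots> = (\<Sum>\<alpha>\<in>UNIV. \<Sum>\<beta>\<in>UNIV. \<Sum>m\<in>UNIV. \<Sum>n\<in>UNIV. x \<alpha> * J m \<alpha> * (y \<beta> * J n \<beta>) * \<omega> m n)"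
    by (simp add: c sum_distrib_left mult_ac)
  also have "\<dots> = (\<Sum>m\<in>UNIV. \<Sum>n\<in>UNIV. \<Sum>\<alpha>\<in>UNIV. \<Sum>\<beta>\<in>UNIV. x \<alpha> * J m \<alpha> * (y \<beta> * J n \<beta>) * \<omega> m n)"
    by (rule sum_swap_pairs)
  also have "\<dots> = (\<Sum>m\<in>UNIV. \<Sum>n\<in>UNIV. (\<Sum>\<alpha>\<in>UNIV. x \<alpha> * J m \<alpha>) * (\<Sum>\<beta>\<in>UNIV. y \<beta> * J n \<beta>) * \<omega> m n)"
    unfolding sum_product by (simp add: sum_distrib_right)
  finally show ?thesis .
qed

lemma sum_left_inverse_imp_right_inverse:
  fixes P Q :: "'m::finite \<Rightarrow> 'm \<Rightarrow> 'r::field"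
  assumes "\<And>m r. (\<Sum>n\<in>UNIV. P m n * Q n r) = (if m = r then 1 else 0)"
  shows "(\<Sum>n\<in>UNIV. Q m n * P n r) = (if m = r then 1 else 0)"
proof -
  have "(\<chi> i j. P i j) ** (\<chi> i j. Q i j) = mat 1"
    by (simp add: vec_eq_iff matrix_matrix_mult_def mat_def assms)
  then have "((\<chi> i j. Q i j) ** (\<chi> i j. P i j)) $ m $ r = mat 1 $ m $ r"
    using matrix_left_right_inverse by metis
  then show ?thesis by (simp add: matrix_matrix_mult_def mat_def)
qed

lemma antisym_inverse_form_expansion:
  fixes \<omega> P :: "'m::finite \<Rightarrow> 'm \<Rightarrow> 'r::comm_ring_1" and x y g g' :: "'m \<Rightarrow> 'r"
  assumes anti: "\<And>m n. \<omega> m n = - \<omega> n m"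
    and left: "\<And>m r. (\<Sum>n\<in>UNIV. P m n * \<omega> n r) = (if m = r then 1 else 0)"
    and right: "\<And>m r. (\<Sum>n\<in>UNIV. \<omega> m n * P n r) = (if m = r then 1 else 0)"
  shows "(\<Sum>m\<in>UNIV. \<Sum>n\<in>UNIV. ((\<Sum>j\<in>UNIV. \<omega> j m * x j) - g m) * P m n * ((\<Sum>j\<in>UNIV. \<omega> j n * y j) - g' n))
    = - (\<Sum>m\<in>UNIV. \<Sum>n\<in>UNIV. x m * y n * \<omega> m n) - (\<Sum>n\<in>UNIV. x n * g' n) + (\<Sum>m\<in>UNIV. g m * y m)
      + (\<Sum>m\<in>UNIV. \<Sum>n\<in>UNIV. P m n * g m * g' n)"
proof -
  define \<Omega>x where "\<Omega>x n = (\<Sum>j\<in>UNIV. \<omega> j n * x j)" for n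
  define \<Omega>y where "\<Omega>y n = (\<Sum>j\<in>UNIV. \<omega> j n * y j)" for n
  have P_\<Omega>y: "(\<Sum>n\<in>UNIV. P m n * \<Omega>y n) = - y m" for m
  proof -
    have transposed: "(\<Sum>n\<in>UNIV. P m n * \<omega> j n) = - (if m = j then 1 else 0)" for j
      using left[of m j] by (simp add: anti[of j] sum_negf)
    have "(\<Sum>n\<in>UNIV. P m n * \<Omega>y n) = (\<Sum>n\<in>UNIV. \<Sum>j\<in>UNIV. y j * (P m n * \<omega> j n))"
      unfolding \<Omega>y_def by (simp add: sum_distrib_left mult_ac)
    also have "\<dots> = (\<Sum>j\<in>UNIV. y j * (\<Sum>n\<in>UNIV. P m n * \<omega> j n))"
      by (subst sum.swap) (simp add: sum_distrib_left)
    finally show ?thesis by (simp add: transposed if_distrib cong: if_cong)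
  qed
  have \<Omega>x_P: "(\<Sum>m\<in>UNIV. \<Omega>x m * P m n) = x n" for n
  proof -
    have "(\<Sum>m\<in>UNIV. \<Omega>x m * P m n) = (\<Sum>m\<in>UNIV. \<Sum>j\<in>UNIV. x j * (\<omega> j m * P m n))"
      unfolding \<Omega>x_def by (simp add: sum_distrib_left sum_distrib_right mult_ac)
    also have "\<dots> = (\<Sum>j\<in>UNIV. x j * (\<Sum>m\<in>UNIV. \<omega> j m * P m n))"
      by (subst sum.swap) (simp add: sum_distrib_left)
    finally show ?thesis by (simp add: right if_distrib cong: if_cong)
  qed
  have swap_g': "(\<Sum>n\<in>UNIV. (\<Sum>m\<in>UNIV. \<Omega>x m * P m n) * g' n) = (\<Sum>m\<in>UNIV. \<Sum>n\<in>UNIV. \<Omega>x m * P m n * g' n)"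
    by (simp add: sum_distrib_right) (rule sum.swap)
  have "(\<Sum>m\<in>UNIV. \<Sum>n\<in>UNIV. (\<Omega>x m - g m) * P m n * (\<Omega>y n - g' n))
     = (\<Sum>m\<in>UNIV. \<Omega>x m * (\<Sum>n\<in>UNIV. P m n * \<Omega>y n)) - (\<Sum>n\<in>UNIV. (\<Sum>m\<in>UNIV. \<Omega>x m * P m n) * g' n)
       - (\<Sum>m\<in>UNIV. g m * (\<Sum>n\<in>UNIV. P m n * \<Omega>y n)) + (\<Sum>m\<in>UNIV. \<Sum>n\<in>UNIV. P m n * g m * g' n)"
    unfolding swap_g' by (simp add: algebra_simps sum_distrib_left sum_subtractf sum.distrib)
  also have "\<dots> = - (\<Sum>m\<in>UNIV. \<Omega>x m * y m) - (\<Sum>n\<in>UNIV. x n * g' n) + (\<Sum>m\<in>UNIV. g m * y m)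
      + (\<Sum>m\<in>UNIV. \<Sum>n\<in>UNIV. P m n * g m * g' n)"
    by (simp add: P_\<Omega>y \<Omega>x_P sum_negf)
  also have "(\<Sum>m\<in>UNIV. \<Omega>x m * y m) = (\<Sum>m\<in>UNIV. \<Sum>n\<in>UNIV. x m * y n * \<omega> m n)"
    unfolding \<Omega>x_def by (subst sum.swap) (simp add: sum_distrib_left sum_distrib_right mult_ac)
  finally show ?thesis unfolding \<Omega>x_def \<Omega>y_def .
qed

lemma closure_relation_algebra:
  fixes x y :: "'a::finite \<Rightarrow> 'r::field" and J :: "'m::finite \<Rightarrow> 'a \<Rightarrow> 'r"
    and \<omega> P :: "'m \<Rightarrow> 'm \<Rightarrow> 'r" and g g' :: "'m \<Rightarrow> 'r"
  assumes c: "\<And>\<alpha> \<beta>. c \<alpha> \<beta> - c \<beta> \<alpha> = (\<Sum>m\<in>UNIV. \<Sum>n\<in>UNIV. J m \<alpha> * J n \<beta> * \<omega> m n)"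
    and anti: "\<And>m n. \<omega> m n = - \<omega> n m"
    and left: "\<And>m r. (\<Sum>n\<in>UNIV. P m n * \<omega> n r) = (if m = r then 1 else 0)"
  defines "X m \<equiv> \<Sum>\<alpha>\<in>UNIV. x \<alpha> * J m \<alpha>" and "Y m \<equiv> \<Sum>\<alpha>\<in>UNIV. y \<alpha> * J m \<alpha>"
  shows "((\<Sum>\<alpha>\<in>UNIV. (\<Sum>\<beta>\<in>UNIV. y \<beta> * c \<alpha> \<beta>) * x \<alpha>) - (\<Sum>n\<in>UNIV. Y n * g n))
      - ((\<Sum>\<alpha>\<in>UNIV. (\<Sum>\<beta>\<in>UNIV. x \<beta> * c \<alpha> \<beta>) * y \<alpha>) - (\<Sum>n\<in>UNIV. X n * g' n))
      + (\<Sum>m\<in>UNIV. \<Sum>n\<in>UNIV. ((\<Sum>j\<in>UNIV. \<omega> j m * X j) - g m) * P m n * ((\<Sum>j\<in>UNIV. \<omega> j n * Y j) - g' n))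
    = (\<Sum>m\<in>UNIV. \<Sum>n\<in>UNIV. P m n * g m * g' n)"
proof -
  have pullback: "(\<Sum>\<alpha>\<in>UNIV. (\<Sum>\<beta>\<in>UNIV. y \<beta> * c \<alpha> \<beta>) * x \<alpha>) - (\<Sum>\<alpha>\<in>UNIV. (\<Sum>\<beta>\<in>UNIV. x \<beta> * c \<alpha> \<beta>) * y \<alpha>)
      = (\<Sum>m\<in>UNIV. \<Sum>n\<in>UNIV. X m * Y n * \<omega> m n)"
    unfolding X_def Y_def by (rule antisymmetric_part_pullback[OF c])
  note expansion = antisym_inverse_form_expansion[OF anti left sum_left_inverse_imp_right_inverse[OF left],
      of X g Y g']
  have commuted: "(\<Sum>m\<in>UNIV. g m * Y m) = (\<Sum>n\<in>UNIV. Y n * g n)" by (simp add: mult.commute)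
  have "(c1 - d1) - (c2 - d2) + q = r" if "c1 - c2 = s" "q = - s - d2 + d1 + r" for c1 d1 c2 d2 q r s :: 'r
    using that by (simp add: algebra_simps)
  from this[OF pullback] show ?thesis by (simp only: expansion commuted)
qed

theorem mainTheorem5:
  fixes \<phi> :: "real^('n::finite) \<Rightarrow> complex^('a::finite)"
    and \<pi> :: "'a \<Rightarrow> complex^'a \<Rightarrow> complex"
    and \<xi> :: "'m::finite \<Rightarrow> complex^'a \<Rightarrow> complex"
    and \<omega> P :: "'m \<Rightarrow> 'm \<Rightarrow> complex^'m \<Rightarrow> complex"
    and h :: "'n \<Rightarrow> complex^'m \<Rightarrow> complex"
    and U :: "(real^'n) set" and V :: "(complex^'a) set" and W :: "(complex^'m) set"
  assumes even_dim: "even CARD('m)"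
    and chartV: "open V"
    and smooth_phi: "smooth_t_on U \<phi>"
    and phi_in: "\<phi> ` U \<subseteq> V"
    and pi_holo: "\<And>\<alpha>. holo_on V (\<pi> \<alpha>)"
    and xi_holo: "\<And>m. holo_on V (\<xi> m)"
    and submersion: "\<And>x w. x \<in> V \<Longrightarrow>
          \<exists>v::complex^'a. \<forall>m. (\<Sum>\<alpha>\<in>UNIV. cpartial (\<xi> m) \<alpha> x * v $ \<alpha>) = w $ m"
    and W_holo: "xivec \<xi> ` V \<subseteq> W" "\<And>k. holo_on W (h k)"
    and omega_antisym: "\<And>y m n. y \<in> xivec \<xi> ` V \<Longrightarrow> \<omega> m n y = - \<omega> n m y"
    and normalisation: "\<And>x \<alpha> \<beta>. x \<in> V \<Longrightarrow>
          cpartial (\<pi> \<alpha>) \<beta> x - cpartial (\<pi> \<beta>) \<alpha> x =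
          (\<Sum>m\<in>UNIV. \<Sum>n\<in>UNIV. cpartial (\<xi> m) \<alpha> x * cpartial (\<xi> n) \<beta> x * \<omega> m n (xivec \<xi> x))"
    and P_inv: "\<And>y m r. y \<in> xivec \<xi> ` V \<Longrightarrow>
          (\<Sum>n\<in>UNIV. P m n y * \<omega> n r y) = (if m = r then 1 else 0)"
    and t_in: "t \<in> U"
  shows "tpartial (Lag \<pi> \<xi> h \<phi> k) l t - tpartial (Lag \<pi> \<xi> h \<phi> l) k t
         + (\<Sum>m\<in>UNIV. \<Sum>n\<in>UNIV. Ups \<xi> \<omega> h \<phi> k m t * P m n (xivec \<xi> (\<phi> t)) * Ups \<xi> \<omega> h \<phi> l n t)
         = PB P (h k) (h l) (xivec \<xi> (\<phi> t))"
proof -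
  have U: "open U" using smooth_phi by (simp add: smooth_t_on_def)
  define x0 where "x0 = \<phi> t"
  have x0: "x0 \<in> V" using phi_in t_in by (auto simp: x0_def)
  then have y0: "xivec \<xi> x0 \<in> xivec \<xi> ` V" by simp
  have \<phi>': "(\<phi> has_derivative frechet_derivative \<phi> (at t)) (at t)"
    using smooth_t_on_differentiable_on(1)[OF smooth_phi] U t_in
    by (simp add: differentiable_on_eq_differentiable_at frechet_derivative_works)
  note dLag = tpartial_Lag[where \<pi>=\<pi> and h=h, OF U t_in phi_in smooth_t_on_differentiable_on(1,2)[OF smooth_phi]
      pi_holo xi_holo W_holo]
  have Ups: "Ups \<xi> \<omega> h \<phi> j n t = (\<Sum>m\<in>UNIV. \<omega> m n (xivec \<xi> x0)
      * (\<Sum>\<alpha>\<in>UNIV. tpartial \<phi> j t $ \<alpha> * cpartial (\<xi> m) \<alpha> x0)) - cpartial (h j) n (xivec \<xi> x0)" for j n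
    using tpartial_holo_comp[OF xi_holo \<phi>'] x0 by (simp add: Ups_def x0_def)
  have mixed_partials: "tpartial (tpartial \<phi> k) l t = tpartial (tpartial \<phi> l) k t"
    by (rule smooth_t_on_tpartial_commute[OF smooth_phi t_in])
  have cancel: "(a + c1 - d1) - (a + c2 - d2) + q = r"
    if "(c1 - d1) - (c2 - d2) + q = r" for a c1 d1 c2 d2 q r :: complex
    using that by (simp add: algebra_simps)
  show ?thesis
    unfolding dLag Ups PB_def x0_def[symmetric] sum.distrib mixed_partials
    by (rule cancel, rule closure_relation_algebra[where c="\<lambda>\<alpha> \<beta>. cpartial (\<pi> \<alpha>) \<beta> x0"
        and J="\<lambda>m \<alpha>. cpartial (\<xi> m) \<alpha> x0" and \<omega>="\<lambda>m n. \<omega> m n (xivec \<xi> x0)"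
        and P="\<lambda>m n. P m n (xivec \<xi> x0)"
        and x="\<lambda>\<alpha>. tpartial \<phi> k t $ \<alpha>" and y="\<lambda>\<alpha>. tpartial \<phi> l t $ \<alpha>"
        and g="\<lambda>n. cpartial (h k) n (xivec \<xi> x0)" and g'="\<lambda>n. cpartial (h l) n (xivec \<xi> x0)"])
      (rule normalisation[OF x0] omega_antisym[OF y0] P_inv[OF y0])+
qed

end
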